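(* Let $G$ be a graph with girth at least $5$ and let $S$ be an MLD-set of $G$. If $x\in S$ and $y\in V(G)\setminus S$ are such that the pair $\{x,y\}$ is not doubly resolved by $S$, then $N(y)=\{x\}$.
   Context: All graphs are finite, simple, undirected and connected; $d(u,v)$ is the shortest-path distance, $N(y)$ the open neighborhood, and the girth is the length of a shortest cycle (infinite for trees). A set $S\subseteq V(G)$ is resolving if for all distinct $x,y\in V(G)$ there is $u\in S$ with $d(u,x)\ne d(u,y)$; dominating if every vertex not in $S$ has a neighbor in $S$. An MLD-set is a set both resolving and dominating. Two vertices $u,v$ doubly resolve a pair $\{x,y\}$ if $d(u,x)-d(u,y)\ne d(v,x)-d(v,y)$; a set $S$ doubly resolves $\{x,y\}$ if some two vertices of $S$ doubly resolve it. *)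

theory Defs
  imports Main
begin

definition walk :: "('a \<Rightarrow> 'a \<Rightarrow> bool) \<Rightarrow> 'a set \<Rightarrow> 'a list \<Rightarrow> bool" where
  "walk E V p \<longleftrightarrow> p \<noteq> [] \<and> set p \<subseteq> V \<and> (\<forall>i. Suc i < length p \<longrightarrow> E (p ! i) (p ! Suc i))"

definition simple_graph :: "'a set \<Rightarrow> ('a \<Rightarrow> 'a \<Rightarrow> bool) \<Rightarrow> bool" where
  "simple_graph V E \<longleftrightarrow> finite V \<and> (\<forall>u v. E u v \<longrightarrow> u \<in> V \<and> v \<in> V)
     \<and> (\<forall>u v. E u v \<longrightarrow> E v u) \<and> (\<forall>u. \<not> E u u)"

definition connected_graph :: "'a set \<Rightarrow> ('a \<Rightarrow> 'a \<Rightarrow> bool) \<Rightarrow> bool" where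
  "connected_graph V E \<longleftrightarrow> V \<noteq> {} \<and>
     (\<forall>u\<in>V. \<forall>v\<in>V. \<exists>p. walk E V p \<and> hd p = u \<and> last p = v)"

definition dist :: "'a set \<Rightarrow> ('a \<Rightarrow> 'a \<Rightarrow> bool) \<Rightarrow> 'a \<Rightarrow> 'a \<Rightarrow> nat" where
  "dist V E u v = (LEAST n. \<exists>p. walk E V p \<and> hd p = u \<and> last p = v \<and> length p = Suc n)"

definition nbhd :: "'a set \<Rightarrow> ('a \<Rightarrow> 'a \<Rightarrow> bool) \<Rightarrow> 'a \<Rightarrow> 'a set" where
  "nbhd V E y = {z \<in> V. E y z}"

definition is_cycle :: "'a set \<Rightarrow> ('a \<Rightarrow> 'a \<Rightarrow> bool) \<Rightarrow> 'a list \<Rightarrow> bool" where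
  "is_cycle V E c \<longleftrightarrow> length c \<ge> 3 \<and> distinct c \<and> walk E V c \<and> E (last c) (hd c)"

definition girth_at_least :: "'a set \<Rightarrow> ('a \<Rightarrow> 'a \<Rightarrow> bool) \<Rightarrow> nat \<Rightarrow> bool" where
  "girth_at_least V E g \<longleftrightarrow> (\<forall>c. is_cycle V E c \<longrightarrow> length c \<ge> g)"

definition resolving :: "'a set \<Rightarrow> ('a \<Rightarrow> 'a \<Rightarrow> bool) \<Rightarrow> 'a set \<Rightarrow> bool" where
  "resolving V E S \<longleftrightarrow> S \<subseteq> V \<and>
     (\<forall>x\<in>V. \<forall>y\<in>V. x \<noteq> y \<longrightarrow> (\<exists>u\<in>S. dist V E u x \<noteq> dist V E u y))"

definition dominating :: "'a set \<Rightarrow> ('a \<Rightarrow> 'a \<Rightarrow> bool) \<Rightarrow> 'a set \<Rightarrow> bool" where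
  "dominating V E S \<longleftrightarrow> S \<subseteq> V \<and> (\<forall>v\<in>V - S. \<exists>u\<in>S. E v u)"

definition MLD_set :: "'a set \<Rightarrow> ('a \<Rightarrow> 'a \<Rightarrow> bool) \<Rightarrow> 'a set \<Rightarrow> bool" where
  "MLD_set V E S \<longleftrightarrow> resolving V E S \<and> dominating V E S"

definition doubly_resolves_pair :: "'a set \<Rightarrow> ('a \<Rightarrow> 'a \<Rightarrow> bool) \<Rightarrow> 'a \<Rightarrow> 'a \<Rightarrow> 'a \<Rightarrow> 'a \<Rightarrow> bool" where
  "doubly_resolves_pair V E u v x y \<longleftrightarrow>
     int (dist V E u x) - int (dist V E u y) \<noteq> int (dist V E v x) - int (dist V E v y)"

definition set_doubly_resolves :: "'a set \<Rightarrow> ('a \<Rightarrow> 'a \<Rightarrow> bool) \<Rightarrow> 'a set \<Rightarrow> 'a \<Rightarrow> 'a \<Rightarrow> bool" where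
  "set_doubly_resolves V E S x y \<longleftrightarrow> (\<exists>u\<in>S. \<exists>v\<in>S. doubly_resolves_pair V E u v x y)"

end

theory Submission
  imports Defs
begin

text \<open>If \<open>S\<close> does not doubly resolve \<open>{x, y}\<close> with \<open>x \<in> S\<close>, then comparing every \<open>v \<in> S\<close>
  with \<open>x\<close> itself gives \<open>d(v, y) = d(v, x) + d(x, y)\<close>. A neighbour of \<open>y\<close> in \<open>S\<close> therefore
  has distance \<open>0\<close> to \<open>x\<close>, so it is \<open>x\<close>, and domination makes \<open>x\<close> a neighbour of \<open>y\<close>.
  Any other neighbour \<open>z\<close> of \<open>y\<close> lies outside \<open>S\<close> and is dominated by some \<open>w \<in> S\<close>;
  then \<open>d(w, x) = d(w, y) - 1 \<le> 1\<close>, so \<open>x, y, z\<close> (if \<open>w = x\<close>) or \<open>w, z, y, x\<close> form a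
  cycle of length 3 or 4, contradicting girth at least 5.\<close>

lemma walk_singleton [simp]: "walk E V [a] \<longleftrightarrow> a \<in> V"
  by (simp add: walk_def)

lemma walk_Cons_Cons [simp]: "walk E V (a # b # p) \<longleftrightarrow> a \<in> V \<and> E a b \<and> walk E V (b # p)"
proof
  assume w: "walk E V (a # b # p)"
  then have edges: "\<And>i. Suc i < length (a # b # p) \<Longrightarrow> E ((a # b # p) ! i) ((a # b # p) ! Suc i)"
    unfolding walk_def by blast
  have "\<forall>i. Suc i < length (b # p) \<longrightarrow> E ((b # p) ! i) ((b # p) ! Suc i)"
    using edges[of "Suc _"] by simp
  with w edges[of 0] show "a \<in> V \<and> E a b \<and> walk E V (b # p)"
    unfolding walk_def by simp
next
  assume h: "a \<in> V \<and> E a b \<and> walk E V (b # p)"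
  have "E ((a # b # p) ! i) ((a # b # p) ! Suc i)" if "Suc i < length (a # b # p)" for i
    using h that unfolding walk_def by (cases i) auto
  with h show "walk E V (a # b # p)"
    unfolding walk_def by simp
qed

lemma dist_le_walk_length:
  assumes "walk E V p" "hd p = u" "last p = v"
  shows "dist V E u v \<le> length p - 1"
proof -
  have "length p = Suc (length p - 1)"
    using assms(1) by (simp add: walk_def)
  with assms have "\<exists>q. walk E V q \<and> hd q = u \<and> last q = v \<and> length q = Suc (length p - 1)"
    by blast
  then show ?thesis
    unfolding dist_def by (rule Least_le)
qed

lemma shortest_walk_exists:
  assumes "connected_graph V E" "u \<in> V" "v \<in> V"
  shows "\<exists>p. walk E V p \<and> hd p = u \<and> last p = v \<and> length p = Suc (dist V E u v)"
proof -
  obtain p where p: "walk E V p" "hd p = u" "last p = v"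
    using assms unfolding connected_graph_def by blast
  moreover have "length p = Suc (length p - 1)"
    using p(1) by (simp add: walk_def)
  ultimately have "\<exists>n p. walk E V p \<and> hd p = u \<and> last p = v \<and> length p = Suc n"
    by blast
  then show ?thesis
    unfolding dist_def by (rule LeastI_ex)
qed

lemma dist_self: "u \<in> V \<Longrightarrow> dist V E u u = 0"
  using dist_le_walk_length[of E V "[u]" u u] by simp

lemma dist_le_1_if_edge:
  assumes "simple_graph V E" "E u v"
  shows "dist V E u v \<le> 1"
  using assms dist_le_walk_length[of E V "[u, v]" u v] by (simp add: simple_graph_def)

lemma dist_le_2_if_common_neighbour:
  assumes "simple_graph V E" "E u w" "E w v"
  shows "dist V E u v \<le> 2"
  using assms dist_le_walk_length[of E V "[u, w, v]" u v] by (simp add: simple_graph_def)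

lemma dist_eq_0_imp_eq:
  assumes "connected_graph V E" "u \<in> V" "v \<in> V" "dist V E u v = 0"
  shows "u = v"
proof -
  obtain p where "hd p = u" "last p = v" "length p = 1"
    using shortest_walk_exists[OF assms(1-3)] assms(4) by auto
  then show ?thesis
    by (cases p) auto
qed

lemma dist_eq_1_imp_edge:
  assumes "connected_graph V E" "u \<in> V" "v \<in> V" "dist V E u v = 1"
  shows "E u v"
proof -
  obtain p where p: "walk E V p" "hd p = u" "last p = v" "length p = Suc (Suc 0)"
    using shortest_walk_exists[OF assms(1-3)] assms(4) by auto
  then obtain a b where "p = [a, b]"
    by (metis length_0_conv length_Suc_conv)
  with p show ?thesis
    by simp
qed

lemma triangle_free_if_girth_4:
  assumes "simple_graph V E" "girth_at_least V E 4" "E a b" "E b c" "E c a"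
  shows False
proof -
  have "a \<in> V" "b \<in> V" "c \<in> V" "a \<noteq> b" "b \<noteq> c" "c \<noteq> a"
    using assms(1,3-5) unfolding simple_graph_def by metis+
  with assms(3-5) have "is_cycle V E [a, b, c]"
    by (simp add: is_cycle_def)
  with assms(2) show False
    unfolding girth_at_least_def by fastforce
qed

lemma square_free_if_girth_5:
  assumes "simple_graph V E" "girth_at_least V E 5" "E a b" "E b c" "E c d" "E d a"
    and "a \<noteq> c" "b \<noteq> d"
  shows False
proof -
  have "a \<in> V" "b \<in> V" "c \<in> V" "d \<in> V" "a \<noteq> b" "b \<noteq> c" "c \<noteq> d" "d \<noteq> a"
    using assms(1,3-6) unfolding simple_graph_def by metis+
  with assms(3-8) have "is_cycle V E [a, b, c, d]"
    by (simp add: is_cycle_def)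
  with assms(2) show False
    unfolding girth_at_least_def by fastforce
qed

lemma girth_at_least_mono: "girth_at_least V E g \<Longrightarrow> h \<le> g \<Longrightarrow> girth_at_least V E h"
  unfolding girth_at_least_def by (meson order_trans)

lemma dist_ge_2_if_girth_5:
  assumes "simple_graph V E" "connected_graph V E" "girth_at_least V E 5"
    and "E x y" "E y z" "E z w" "z \<noteq> x" "w \<noteq> y"
  shows "2 \<le> dist V E w x"
proof (rule ccontr)
  have "w \<in> V" "x \<in> V"
    using assms(1,4,6) unfolding simple_graph_def by blast+
  assume "\<not> 2 \<le> dist V E w x"
  then have "dist V E w x = 0 \<or> dist V E w x = 1"
    by linarith
  then consider "w = x" | "E w x"
    using dist_eq_0_imp_eq[OF assms(2) \<open>w \<in> V\<close> \<open>x \<in> V\<close>]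
      dist_eq_1_imp_edge[OF assms(2) \<open>w \<in> V\<close> \<open>x \<in> V\<close>] by blast
  then show False
  proof cases
    case 1
    have "girth_at_least V E 4"
      using girth_at_least_mono[OF assms(3)] by simp
    with 1 assms(6) show False
      using triangle_free_if_girth_4[OF assms(1) _ assms(4,5)] by blast
  next
    case 2
    then show False
      using square_free_if_girth_5[OF assms(1,3-6) 2] assms(7,8) by blast
  qed
qed

lemma dist_via_if_not_doubly_resolved:
  assumes "\<not> set_doubly_resolves V E S x y" "x \<in> S" "x \<in> V" "v \<in> S"
  shows "dist V E v y = dist V E v x + dist V E x y"
proof -
  have "\<not> doubly_resolves_pair V E x v x y"
    using assms(1,2,4) unfolding set_doubly_resolves_def by blast
  with dist_self[OF assms(3)] show ?thesis
    unfolding doubly_resolves_pair_def by simp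
qed

lemma neighbour_in_set_if_not_doubly_resolved:
  assumes "simple_graph V E" "connected_graph V E" "S \<subseteq> V"
    and "\<not> set_doubly_resolves V E S x y" "x \<in> S" "y \<in> V" "x \<noteq> y"
    and "s \<in> S" "E y s"
  shows "s = x"
proof -
  have "x \<in> V" "s \<in> V"
    using assms(3,5,8) by auto
  have "dist V E x y \<noteq> 0"
    using dist_eq_0_imp_eq[OF assms(2) \<open>x \<in> V\<close> assms(6)] assms(7) by auto
  moreover have "dist V E s y \<le> 1"
    using assms(1,9) by (intro dist_le_1_if_edge) (auto simp: simple_graph_def)
  ultimately have "dist V E s x = 0"
    using dist_via_if_not_doubly_resolved[OF assms(4,5) \<open>x \<in> V\<close> assms(8)] by simp
  then show ?thesis
    using dist_eq_0_imp_eq[OF assms(2) \<open>s \<in> V\<close> \<open>x \<in> V\<close>] by simp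
qed

lemma edge_to_set_if_not_doubly_resolved:
  assumes "simple_graph V E" "connected_graph V E" "dominating V E S"
    and "\<not> set_doubly_resolves V E S x y" "x \<in> S" "y \<in> V - S"
  shows "E y x"
proof -
  have "S \<subseteq> V" and "\<exists>s\<in>S. E y s"
    using assms(3,6) unfolding dominating_def by blast+
  with assms show ?thesis
    using neighbour_in_set_if_not_doubly_resolved[OF assms(1,2) \<open>S \<subseteq> V\<close> assms(4,5)] by blast
qed

theorem mainTheorem9:
  fixes V :: "'a set" and E :: "'a \<Rightarrow> 'a \<Rightarrow> bool" and S :: "'a set" and x y :: 'a
  assumes "simple_graph V E" and "connected_graph V E"
    and "girth_at_least V E 5"
    and "MLD_set V E S"
    and "x \<in> S" and "y \<in> V - S"
    and "\<not> set_doubly_resolves V E S x y"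
  shows "nbhd V E y = {x}"
proof -
  have sym: "\<And>u v. E u v \<Longrightarrow> E v u" and "S \<subseteq> V" and "dominating V E S"
    using assms(1,4) by (auto simp: simple_graph_def MLD_set_def dominating_def)
  have "x \<in> V" "y \<in> V" "x \<noteq> y"
    using assms(5,6) \<open>S \<subseteq> V\<close> by auto
  have "E y x"
    using edge_to_set_if_not_doubly_resolved[OF assms(1,2) \<open>dominating V E S\<close> assms(7,5,6)] .
  have "dist V E x y = 1"
    using dist_le_1_if_edge[OF assms(1) sym[OF \<open>E y x\<close>]] \<open>x \<noteq> y\<close>
      dist_eq_0_imp_eq[OF assms(2) \<open>x \<in> V\<close> \<open>y \<in> V\<close>] by fastforce
  have "z = x" if "E y z" for z
  proof (rule ccontr)
    assume "z \<noteq> x"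
    have "z \<in> V" "z \<notin> S"
      using assms(1) that neighbour_in_set_if_not_doubly_resolved[OF assms(1,2) \<open>S \<subseteq> V\<close> assms(7,5)]
        \<open>y \<in> V\<close> \<open>x \<noteq> y\<close> \<open>z \<noteq> x\<close> unfolding simple_graph_def by blast+
    then obtain w where "w \<in> S" "E z w"
      using \<open>dominating V E S\<close> unfolding dominating_def by blast
    have "dist V E w y \<le> 2"
      using dist_le_2_if_common_neighbour[OF assms(1) sym[OF \<open>E z w\<close>] sym[OF that]] .
    then have "dist V E w x \<le> 1"
      using dist_via_if_not_doubly_resolved[OF assms(7,5) \<open>x \<in> V\<close> \<open>w \<in> S\<close>] \<open>dist V E x y = 1\<close>
      by simp
    moreover have "w \<noteq> y"
      using \<open>w \<in> S\<close> assms(6) by blast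
    ultimately show False
      using dist_ge_2_if_girth_5[OF assms(1-3) sym[OF \<open>E y x\<close>] that \<open>E z w\<close> \<open>z \<noteq> x\<close>] by simp
  qed
  with \<open>E y x\<close> \<open>x \<in> V\<close> show ?thesis
    unfolding nbhd_def by blast
qed

end
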